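(* Let $\sigma$ be a rank-one ruled submanifold. Then for every $t\in I$ the degree of the ruling distribution of $\sigma$ at $t$ is at most $1$. In particular, a noncylindrical rank-one submanifold is of degree one.
   Context: Ruled submanifold: given an open interval $I$, a smooth unit-speed curve $\gamma\colon I\to\mathbb{R}^{m+n}$ and smooth vector fields $X_{1},\dotsc,X_{m-1}$ along $\gamma$ that are orthonormal at each $t$, define $\sigma(t,u^{1},\dotsc,u^{m-1})=\gamma(t)+\sum_{j=1}^{m-1}u^{j}X_{j}(t)$ on $I\times\mathbb{R}^{m-1}$. A point is regular if $d\sigma$ is injective there. The ruling distribution is $\mathcal{D}_{t}=\operatorname{Span}(X_{j}(t))_{j=1}^{m-1}$. Define $\rho_{t}\colon\mathcal{D}_{t}\to\mathcal{D}_{t}^{\perp}$ by $\sum_{j}c_{j}X_{j}(t)\mapsto\sum_{j}c_{j}\pi^{\perp}\dot X_{j}(t)$, where $\pi^{\perp}$ is orthogonal projection onto $\mathcal{D}_{t}^{\perp}$. The degree of $\mathcal{D}$ at $t$ is $\operatorname{rank}\rho_{t}$. The submanifold $\sigma$ is noncylindrical if the degree is nonzero for every $t$, and of degree one if it equals $1$ for every $t$. A ruled submanifold is rank-one if at every regular point the kernel of its second fundamental form has dimension $m-1$. *)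

theory Defs
  imports "HOL-Analysis.Analysis"
begin

fun vderivs :: "nat \<Rightarrow> (real \<Rightarrow> 'a::real_normed_vector) \<Rightarrow> real \<Rightarrow> 'a" where
  "vderivs 0 f = f"
| "vderivs (Suc k) f = (\<lambda>t. vector_derivative (vderivs k f) (at t))"

definition smooth_curve_on :: "real set \<Rightarrow> (real \<Rightarrow> 'a::real_normed_vector) \<Rightarrow> bool" where
  "smooth_curve_on I f \<longleftrightarrow> (\<forall>k. \<forall>t\<in>I. vderivs k f differentiable (at t))"

definition open_interval :: "real set \<Rightarrow> bool" where
  "open_interval I \<longleftrightarrow> open I \<and> is_interval I \<and> I \<noteq> {}"

definition orth_proj :: "'a::euclidean_space set \<Rightarrow> 'a \<Rightarrow> 'a" where
  "orth_proj S v = (THE w. w \<in> S \<and> (\<forall>s\<in>S. (v - w) \<bullet> s = 0))"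

definition orth_proj_perp :: "'a::euclidean_space set \<Rightarrow> 'a \<Rightarrow> 'a" where
  "orth_proj_perp S v = v - orth_proj S v"

text \<open>Data of a ruled submanifold: open interval I, smooth unit-speed curve gamma,
  and smooth vector fields X j (j ranging over the finite index type 'k, of cardinality m-1)
  along gamma, orthonormal at each t.\<close>
definition ruled_data :: "real set \<Rightarrow> (real \<Rightarrow> 'a::euclidean_space) \<Rightarrow> ('k::finite \<Rightarrow> real \<Rightarrow> 'a) \<Rightarrow> bool" where
  "ruled_data I \<gamma> X \<longleftrightarrow>
     open_interval I \<and> smooth_curve_on I \<gamma> \<and>
     (\<forall>t\<in>I. norm (vector_derivative \<gamma> (at t)) = 1) \<and>
     (\<forall>j. smooth_curve_on I (X j)) \<and>
     (\<forall>t\<in>I. \<forall>i j. X i t \<bullet> X j t = (if i = j then 1 else 0))"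

definition ruled_map :: "(real \<Rightarrow> 'a::euclidean_space) \<Rightarrow> ('k::finite \<Rightarrow> real \<Rightarrow> 'a) \<Rightarrow> real \<times> (real^'k) \<Rightarrow> 'a" where
  "ruled_map \<gamma> X p = \<gamma> (fst p) + (\<Sum>j\<in>UNIV. (snd p $ j) *\<^sub>R X j (fst p))"

definition regular_point :: "('b::euclidean_space \<Rightarrow> 'a::euclidean_space) \<Rightarrow> 'b \<Rightarrow> bool" where
  "regular_point \<sigma> p \<longleftrightarrow> \<sigma> differentiable (at p) \<and> inj (frechet_derivative \<sigma> (at p))"

definition tangent_space :: "('b::euclidean_space \<Rightarrow> 'a::euclidean_space) \<Rightarrow> 'b \<Rightarrow> 'a set" where
  "tangent_space \<sigma> p = range (frechet_derivative \<sigma> (at p))"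

definition second_deriv :: "('b::euclidean_space \<Rightarrow> 'a::euclidean_space) \<Rightarrow> 'b \<Rightarrow> 'b \<Rightarrow> 'b \<Rightarrow> 'a" where
  "second_deriv \<sigma> p v w = frechet_derivative (\<lambda>q. frechet_derivative \<sigma> (at q) v) (at p) w"

text \<open>Second fundamental form at p, in coordinates: II(d sigma v, d sigma w) is the normal
  component of D^2 sigma_p (v, w).\<close>
definition sff :: "('b::euclidean_space \<Rightarrow> 'a::euclidean_space) \<Rightarrow> 'b \<Rightarrow> 'b \<Rightarrow> 'b \<Rightarrow> 'a" where
  "sff \<sigma> p v w = orth_proj_perp (tangent_space \<sigma> p) (second_deriv \<sigma> p v w)"

definition sff_kernel :: "('b::euclidean_space \<Rightarrow> 'a::euclidean_space) \<Rightarrow> 'b \<Rightarrow> 'a set" where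
  "sff_kernel \<sigma> p = frechet_derivative \<sigma> (at p) ` {v. \<forall>w. sff \<sigma> p v w = 0}"

text \<open>Rank-one: at every regular point (t,u) with t in I the kernel of the second fundamental
  form has dimension m - 1 = CARD('k).\<close>
definition rank_one_ruled :: "real set \<Rightarrow> (real \<Rightarrow> 'a::euclidean_space) \<Rightarrow> ('k::finite \<Rightarrow> real \<Rightarrow> 'a) \<Rightarrow> bool" where
  "rank_one_ruled I \<gamma> X \<longleftrightarrow>
     (\<forall>p. fst p \<in> I \<longrightarrow> regular_point (ruled_map \<gamma> X) p \<longrightarrow>
          dim (sff_kernel (ruled_map \<gamma> X) p) = CARD('k))"

definition ruling_dist :: "('k::finite \<Rightarrow> real \<Rightarrow> 'a::euclidean_space) \<Rightarrow> real \<Rightarrow> 'a set" where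
  "ruling_dist X t = span (range (\<lambda>j. X j t))"

definition rho :: "('k::finite \<Rightarrow> real \<Rightarrow> 'a::euclidean_space) \<Rightarrow> real \<Rightarrow> 'a \<Rightarrow> 'a" where
  "rho X t v = (\<Sum>j\<in>UNIV. (v \<bullet> X j t) *\<^sub>R
                   orth_proj_perp (ruling_dist X t) (vector_derivative (X j) (at t)))"

definition ruling_degree :: "('k::finite \<Rightarrow> real \<Rightarrow> 'a::euclidean_space) \<Rightarrow> real \<Rightarrow> nat" where
  "ruling_degree X t = dim (rho X t ` ruling_dist X t)"

definition noncylindrical :: "real set \<Rightarrow> ('k::finite \<Rightarrow> real \<Rightarrow> 'a::euclidean_space) \<Rightarrow> bool" where
  "noncylindrical I X \<longleftrightarrow> (\<forall>t\<in>I. ruling_degree X t \<noteq> 0)"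

definition degree_one :: "real set \<Rightarrow> ('k::finite \<Rightarrow> real \<Rightarrow> 'a::euclidean_space) \<Rightarrow> bool" where
  "degree_one I X \<longleftrightarrow> (\<forall>t\<in>I. ruling_degree X t = 1)"

end

theory Submission
  imports Defs
begin

text \<open>Fix t. If every velocity \<partial>\<sigma>/\<partial>t(t, u) lies in the ruling D_t, then all X_j'(t) lie in D_t and
  \<rho>_t = 0. Otherwise (t, u) is a regular point for some u, with tangent space spanned by
  V = \<partial>\<sigma>/\<partial>t(t, u) and D_t. The mixed second derivatives of \<sigma> are the X_j'(t), so if one of them
  left the tangent space, the kernel of the second fundamental form would have dimension less than
  m - 1, contradicting rank one. Hence every X_j'(t) lies in span V + D_t, its normal part
  \<pi>\<perp> X_j'(t) is a multiple of \<pi>\<perp> V, and the image of \<rho>_t is at most one-dimensional.\<close>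

lemma orth_proj_unique:
  fixes S :: "'a::euclidean_space set"
  assumes "subspace S" "w \<in> S" "\<forall>s\<in>S. (v - w) \<bullet> s = 0"
  shows "orth_proj S v = w"
  unfolding orth_proj_def
proof (rule the_equality)
  show "w \<in> S \<and> (\<forall>s\<in>S. (v - w) \<bullet> s = 0)" using assms(2,3) by blast
next
  fix w' assume w': "w' \<in> S \<and> (\<forall>s\<in>S. (v - w') \<bullet> s = 0)"
  then have "w' - w \<in> S" using assms(1,2) by (simp add: subspace_diff)
  then have "(v - w) \<bullet> (w' - w) - (v - w') \<bullet> (w' - w) = 0" using assms(3) w' by simp
  then have "(w' - w) \<bullet> (w' - w) = 0" by (simp add: inner_diff_left)
  then show "w' = w" by simp
qed

lemma orth_proj:
  fixes S :: "'a::euclidean_space set"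
  assumes "subspace S"
  shows orth_proj_in: "orth_proj S v \<in> S"
    and orth_proj_orthogonal: "\<forall>s\<in>S. (v - orth_proj S v) \<bullet> s = 0"
proof -
  obtain y z where y: "y \<in> span S" and z: "\<And>w. w \<in> span S \<Longrightarrow> orthogonal z w" and v: "v = y + z"
    using orthogonal_subspace_decomp_exists by blast
  have "y \<in> S" using y assms by (metis span_eq_iff)
  moreover have "\<forall>s\<in>S. (v - y) \<bullet> s = 0" using z v by (simp add: orthogonal_def span_base)
  ultimately show "orth_proj S v \<in> S" "\<forall>s\<in>S. (v - orth_proj S v) \<bullet> s = 0"
    using orth_proj_unique[OF assms] by auto
qed

lemma linear_orth_proj:
  fixes S :: "'a::euclidean_space set"
  assumes "subspace S"
  shows "linear (orth_proj S)"
proof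
  fix x y
  show "orth_proj S (x + y) = orth_proj S x + orth_proj S y"
    using orth_proj[OF assms, of x] orth_proj[OF assms, of y] assms
    by (intro orth_proj_unique) (auto simp: subspace_add inner_diff_left inner_add_left algebra_simps)
next
  fix c x
  show "orth_proj S (c *\<^sub>R x) = c *\<^sub>R orth_proj S x"
    using orth_proj[OF assms, of x] assms
    by (intro orth_proj_unique) (auto simp: subspace_scale inner_diff_left algebra_simps)
qed

lemma linear_orth_proj_perp:
  fixes S :: "'a::euclidean_space set"
  assumes "subspace S"
  shows "linear (orth_proj_perp S)"
  unfolding orth_proj_perp_def[abs_def]
  using linear_orth_proj[OF assms] by (intro linear_compose_sub linear_ident)

lemma orth_proj_perp_eq_0_iff:
  fixes S :: "'a::euclidean_space set"
  assumes "subspace S"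
  shows "orth_proj_perp S v = 0 \<longleftrightarrow> v \<in> S"
proof
  assume "orth_proj_perp S v = 0"
  then show "v \<in> S" using orth_proj_in[OF assms, of v] by (simp add: orth_proj_perp_def)
next
  assume "v \<in> S"
  then have "orth_proj S v = v" by (intro orth_proj_unique[OF assms]) auto
  then show "orth_proj_perp S v = 0" by (simp add: orth_proj_perp_def)
qed

lemma dim_kernel_less_DIM:
  fixes f :: "'n::euclidean_space \<Rightarrow> 'a::euclidean_space"
  assumes "linear f" "f x \<noteq> 0"
  shows "dim {y. f y = 0} < DIM('n)"
proof -
  have "subspace {y. f y = 0}"
    using assms(1) by (simp add: subspace_def linear_add linear_scale linear_0)
  then have "span {y. f y = 0} = {y. f y = 0}" by (simp add: span_eq_iff)
  moreover have "{y. f y = 0} \<subset> UNIV" using assms(2) by auto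
  ultimately have "span {y. f y = 0} \<subset> span UNIV" by (simp only: span_UNIV)
  then have "dim {y. f y = 0} < dim (UNIV :: 'n set)" by (rule dim_psubset)
  then show ?thesis by simp
qed

lemma inner_sum_orthonormal:
  fixes x :: "'k::finite \<Rightarrow> 'a::real_inner"
  assumes "\<And>i j. x i \<bullet> x j = (if i = j then 1 else 0)"
  shows "(\<Sum>j\<in>UNIV. c j *\<^sub>R x j) \<bullet> x k = c k"
proof -
  have "(\<Sum>j\<in>UNIV. c j *\<^sub>R x j) \<bullet> x k = (\<Sum>j\<in>UNIV. if j = k then c j else 0)"
    by (simp add: inner_sum_left assms if_distrib cong: if_cong)
  then show ?thesis by simp
qed

lemma sum_axis_scaleR: "(\<Sum>j\<in>UNIV. axis k (1::real) $ j *\<^sub>R f j) = (f k :: 'a::real_vector)"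
proof -
  have "(\<Sum>j\<in>UNIV. axis k (1::real) $ j *\<^sub>R f j) = (\<Sum>j\<in>UNIV. if k = j then f j else 0)"
    by (rule sum.cong) (auto simp: axis_def)
  then show ?thesis by simp
qed

lemma smooth_curve_on_differentiable:
  assumes "smooth_curve_on I f" "t \<in> I"
  shows "f differentiable (at t)"
    and "(\<lambda>s. vector_derivative f (at s)) differentiable (at t)"
proof -
  have "vderivs 0 f differentiable (at t)" "vderivs (Suc 0) f differentiable (at t)"
    using assms unfolding smooth_curve_on_def by blast+
  then show "f differentiable (at t)" "(\<lambda>s. vector_derivative f (at s)) differentiable (at t)"
    by simp_all
qed

lemma ruled_data_differentiable:
  assumes "ruled_data I \<gamma> X" "t \<in> I"
  shows "\<gamma> differentiable (at t)" "(\<lambda>s. vector_derivative \<gamma> (at s)) differentiable (at t)"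
    and "X j differentiable (at t)" "(\<lambda>s. vector_derivative (X j) (at s)) differentiable (at t)"
  using assms smooth_curve_on_differentiable[of I \<gamma> t] smooth_curve_on_differentiable[of I "X j" t]
  by (auto simp: ruled_data_def)

lemma has_derivative_comp_fst:
  fixes f :: "real \<Rightarrow> 'a::real_normed_vector" and p :: "real \<times> 'b::real_normed_vector"
  assumes "f differentiable (at (fst p))"
  shows "((\<lambda>q. f (fst q)) has_derivative (\<lambda>w. fst w *\<^sub>R vector_derivative f (at (fst p)))) (at p)"
proof -
  have "(f has_derivative (\<lambda>s. s *\<^sub>R vector_derivative f (at (fst p)))) (at (fst p))"
    using assms vector_derivative_works has_vector_derivative_def by blast
  from has_derivative_compose[OF has_derivative_fst[OF has_derivative_ident] this] show ?thesis
    by simp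
qed

lemma has_derivative_snd_nth:
  "((\<lambda>q::real \<times> (real^'k). snd q $ j) has_derivative (\<lambda>w. snd w $ j)) (at p)"
  by (rule bounded_linear_imp_has_derivative)
     (rule bounded_linear_compose[OF bounded_linear_vec_nth bounded_linear_snd])

definition ruling_velocity ::
    "(real \<Rightarrow> 'a::euclidean_space) \<Rightarrow> ('k::finite \<Rightarrow> real \<Rightarrow> 'a) \<Rightarrow> real \<Rightarrow> real^'k \<Rightarrow> 'a" where
  "ruling_velocity \<gamma> X t u =
     vector_derivative \<gamma> (at t) + (\<Sum>j\<in>UNIV. u $ j *\<^sub>R vector_derivative (X j) (at t))"

definition ruled_differential :: "(real \<Rightarrow> 'a::euclidean_space) \<Rightarrow> ('k::finite \<Rightarrow> real \<Rightarrow> 'a) \<Rightarrow>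
    real \<times> (real^'k) \<Rightarrow> real \<times> (real^'k) \<Rightarrow> 'a" where
  "ruled_differential \<gamma> X p z =
     fst z *\<^sub>R ruling_velocity \<gamma> X (fst p) (snd p) + (\<Sum>j\<in>UNIV. snd z $ j *\<^sub>R X j (fst p))"

text \<open>D\<twosuperior>\<sigma>_p(v, w): the only nonvanishing second partials of \<sigma> are \<partial>\<twosuperior>\<sigma>/\<partial>t\<twosuperior> and
  \<partial>\<twosuperior>\<sigma>/\<partial>t\<partial>u_j = X_j'(t).\<close>
definition ruled_second_differential :: "(real \<Rightarrow> 'a::euclidean_space) \<Rightarrow> ('k::finite \<Rightarrow> real \<Rightarrow> 'a) \<Rightarrow>
    real \<times> (real^'k) \<Rightarrow> real \<times> (real^'k) \<Rightarrow> real \<times> (real^'k) \<Rightarrow> 'a" where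
  "ruled_second_differential \<gamma> X p v w =
     (fst v * fst w) *\<^sub>R (vector_derivative (\<lambda>s. vector_derivative \<gamma> (at s)) (at (fst p))
        + (\<Sum>j\<in>UNIV. snd p $ j *\<^sub>R vector_derivative (\<lambda>s. vector_derivative (X j) (at s)) (at (fst p))))
     + fst v *\<^sub>R (\<Sum>j\<in>UNIV. snd w $ j *\<^sub>R vector_derivative (X j) (at (fst p)))
     + fst w *\<^sub>R (\<Sum>j\<in>UNIV. snd v $ j *\<^sub>R vector_derivative (X j) (at (fst p)))"

lemma has_derivative_ruled_map:
  assumes "\<gamma> differentiable (at (fst p))" "\<And>j. X j differentiable (at (fst p))"
  shows "(ruled_map \<gamma> X has_derivative ruled_differential \<gamma> X p) (at p)"
proof -
  have "((\<lambda>q. \<gamma> (fst q) + (\<Sum>j\<in>UNIV. snd q $ j *\<^sub>R X j (fst q))) has_derivative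
     (\<lambda>w. fst w *\<^sub>R vector_derivative \<gamma> (at (fst p)) + (\<Sum>j\<in>UNIV.
        snd p $ j *\<^sub>R (fst w *\<^sub>R vector_derivative (X j) (at (fst p))) + snd w $ j *\<^sub>R X j (fst p)))) (at p)"
    by (intro has_derivative_add has_derivative_sum has_derivative_scaleR has_derivative_comp_fst
        has_derivative_snd_nth assms)
  then show ?thesis
    unfolding ruled_map_def[abs_def] ruled_differential_def[abs_def] ruling_velocity_def
    by (rule has_derivative_eq_rhs) (auto simp: fun_eq_iff sum.distrib scaleR_sum_right algebra_simps)
qed

lemma has_derivative_ruled_differential:
  assumes "(\<lambda>s. vector_derivative \<gamma> (at s)) differentiable (at (fst p))"
    and "\<And>j. (\<lambda>s. vector_derivative (X j) (at s)) differentiable (at (fst p))"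
    and "\<And>j. X j differentiable (at (fst p))"
  shows "((\<lambda>q. ruled_differential \<gamma> X q v) has_derivative ruled_second_differential \<gamma> X p v) (at p)"
proof -
  have "((\<lambda>q. fst v *\<^sub>R (vector_derivative \<gamma> (at (fst q)) + (\<Sum>j\<in>UNIV. snd q $ j *\<^sub>R vector_derivative (X j) (at (fst q))))
      + (\<Sum>j\<in>UNIV. snd v $ j *\<^sub>R X j (fst q))) has_derivative
     (\<lambda>w. fst v *\<^sub>R (fst w *\<^sub>R vector_derivative (\<lambda>s. vector_derivative \<gamma> (at s)) (at (fst p))
      + (\<Sum>j\<in>UNIV. snd p $ j *\<^sub>R (fst w *\<^sub>R vector_derivative (\<lambda>s. vector_derivative (X j) (at s)) (at (fst p))) + snd w $ j *\<^sub>R vector_derivative (X j) (at (fst p))))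
      + (\<Sum>j\<in>UNIV. snd v $ j *\<^sub>R (fst w *\<^sub>R vector_derivative (X j) (at (fst p)))))) (at p)"
    by (intro has_derivative_add has_derivative_sum has_derivative_scaleR has_derivative_const
        has_derivative_scaleR_right has_derivative_snd_nth assms
        has_derivative_comp_fst[where f="\<lambda>s. vector_derivative _ (at s)", simplified]
        has_derivative_comp_fst)
  then show ?thesis
    unfolding ruled_differential_def[abs_def] ruled_second_differential_def[abs_def] ruling_velocity_def
    by (rule has_derivative_eq_rhs)
       (auto simp: fun_eq_iff sum.distrib scaleR_sum_right scaleR_add_right algebra_simps)
qed

lemma frechet_derivative_ruled_map:
  assumes "ruled_data I \<gamma> X" "fst p \<in> I"
  shows "frechet_derivative (ruled_map \<gamma> X) (at p) = ruled_differential \<gamma> X p"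
    and "(ruled_map \<gamma> X has_derivative ruled_differential \<gamma> X p) (at p)"
proof -
  show "(ruled_map \<gamma> X has_derivative ruled_differential \<gamma> X p) (at p)"
    using ruled_data_differentiable[OF assms] by (intro has_derivative_ruled_map)
  then show "frechet_derivative (ruled_map \<gamma> X) (at p) = ruled_differential \<gamma> X p"
    by (metis frechet_derivative_at)
qed

lemma second_deriv_ruled_map:
  assumes "ruled_data I \<gamma> X" "fst p \<in> I"
  shows "second_deriv (ruled_map \<gamma> X) p v w = ruled_second_differential \<gamma> X p v w"
proof -
  have "open I" using assms(1) by (simp add: ruled_data_def open_interval_def)
  have "((\<lambda>q. ruled_differential \<gamma> X q v) has_derivative ruled_second_differential \<gamma> X p v) (at p)"
    using ruled_data_differentiable[OF assms] by (intro has_derivative_ruled_differential)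
  then have "((\<lambda>q. frechet_derivative (ruled_map \<gamma> X) (at q) v)
              has_derivative ruled_second_differential \<gamma> X p v) (at p)"
  proof (rule has_derivative_transform_within_open[where s="I \<times> UNIV"])
    show "open (I \<times> (UNIV :: (real^'b) set))" using \<open>open I\<close> by (simp add: open_Times)
    show "p \<in> I \<times> UNIV" using assms(2) by (simp add: mem_Times_iff)
  qed (simp add: frechet_derivative_ruled_map(1)[OF assms(1)] mem_Times_iff)
  then show ?thesis unfolding second_deriv_def by (metis frechet_derivative_at)
qed

lemma orth_proj_perp_ruled_differential:
  "orth_proj_perp (ruling_dist X (fst p)) (ruled_differential \<gamma> X p z) =
     fst z *\<^sub>R orth_proj_perp (ruling_dist X (fst p)) (ruling_velocity \<gamma> X (fst p) (snd p))"
proof -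
  let ?D = "ruling_dist X (fst p)"
  have sD: "subspace ?D" by (simp add: ruling_dist_def)
  have "X j (fst p) \<in> ?D" for j by (auto simp: ruling_dist_def intro: span_base)
  then have "orth_proj_perp ?D (X j (fst p)) = 0" for j by (simp add: orth_proj_perp_eq_0_iff[OF sD])
  then show ?thesis
    using linear_orth_proj_perp[OF sD]
    by (simp add: ruled_differential_def linear_add linear_scale linear_sum)
qed

lemma inj_ruled_differential:
  assumes orthonormal: "\<And>i j. X i (fst p) \<bullet> X j (fst p) = (if i = j then 1 else 0)"
    and transversal: "ruling_velocity \<gamma> X (fst p) (snd p) \<notin> ruling_dist X (fst p)"
  shows "inj (ruled_differential \<gamma> X p)"
proof -
  have "linear (ruled_differential \<gamma> X p)"
    by (rule linearI) (simp_all add: ruled_differential_def algebra_simps sum.distrib scaleR_sum_right)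
  moreover have "z = 0" if z: "ruled_differential \<gamma> X p z = 0" for z
  proof -
    have sD: "subspace (ruling_dist X (fst p))" by (simp add: ruling_dist_def)
    have "orth_proj_perp (ruling_dist X (fst p)) (ruling_velocity \<gamma> X (fst p) (snd p)) \<noteq> 0"
      using transversal by (simp add: orth_proj_perp_eq_0_iff[OF sD])
    moreover have "fst z *\<^sub>R orth_proj_perp (ruling_dist X (fst p)) (ruling_velocity \<gamma> X (fst p) (snd p)) = 0"
      using orth_proj_perp_ruled_differential[of X p \<gamma> z] z linear_0[OF linear_orth_proj_perp[OF sD]]
      by simp
    ultimately have "fst z = 0" by simp
    then have "(\<Sum>j\<in>UNIV. snd z $ j *\<^sub>R X j (fst p)) = 0" using z by (simp add: ruled_differential_def)
    then have "snd z $ k = 0" for k using inner_sum_orthonormal[OF orthonormal, of "\<lambda>j. snd z $ j" k] by simp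
    with \<open>fst z = 0\<close> show "z = 0" by (simp add: prod_eq_iff vec_eq_iff)
  qed
  ultimately show ?thesis by (simp add: linear_inj_iff_eq_0)
qed

lemma regular_point_ruled_map:
  assumes "ruled_data I \<gamma> X" "fst p \<in> I"
    and "ruling_velocity \<gamma> X (fst p) (snd p) \<notin> ruling_dist X (fst p)"
  shows "regular_point (ruled_map \<gamma> X) p"
  using assms frechet_derivative_ruled_map[OF assms(1,2)]
  by (auto simp: regular_point_def differentiable_def ruled_data_def intro!: inj_ruled_differential)

lemma subspace_tangent_space:
  assumes "\<sigma> differentiable (at p)"
  shows "subspace (tangent_space \<sigma> p)"
  unfolding tangent_space_def
  using assms frechet_derivative_works has_derivative_linear linear_subspace_image subspace_UNIV
  by blast

lemma sff_kernel_ruled_map_subset: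
  fixes X :: "'k::finite \<Rightarrow> real \<Rightarrow> 'a::euclidean_space"
    and \<gamma> :: "real \<Rightarrow> 'a" and p :: "real \<times> (real^'k)"
  defines "T \<equiv> tangent_space (ruled_map \<gamma> X) p"
  assumes data: "ruled_data I \<gamma> X" and pI: "fst p \<in> I"
    and normal: "vector_derivative (X j) (at (fst p)) \<notin> T"
  shows "{v. \<forall>w. sff (ruled_map \<gamma> X) p v w = 0} \<subseteq>
    (\<lambda>c. (0, c)) ` {c. orth_proj_perp T (\<Sum>i\<in>UNIV. c $ i *\<^sub>R vector_derivative (X i) (at (fst p))) = 0}"
proof
  let ?D2 = "ruled_second_differential \<gamma> X p"
  have sT: "subspace T" unfolding T_def
    using frechet_derivative_ruled_map(2)[OF data pI] by (metis subspace_tangent_space differentiable_def)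
  have lT: "linear (orth_proj_perp T)" by (rule linear_orth_proj_perp[OF sT])
  fix v assume "v \<in> {v. \<forall>w. sff (ruled_map \<gamma> X) p v w = 0}"
  then have "sff (ruled_map \<gamma> X) p v w = 0" for w by blast
  then have v: "orth_proj_perp T (?D2 v w) = 0" for w
    by (simp add: sff_def T_def second_deriv_ruled_map[OF data pI])
  have "?D2 v (0, axis j 1) = fst v *\<^sub>R vector_derivative (X j) (at (fst p))"
    by (simp add: ruled_second_differential_def sum_axis_scaleR)
  then have "fst v *\<^sub>R orth_proj_perp T (vector_derivative (X j) (at (fst p))) = 0"
    using v[of "(0, axis j 1)"] lT by (simp add: linear_scale)
  then have v1: "fst v = 0" using normal by (simp add: orth_proj_perp_eq_0_iff[OF sT])
  then have "?D2 v (1, 0) = (\<Sum>i\<in>UNIV. snd v $ i *\<^sub>R vector_derivative (X i) (at (fst p)))"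
    by (simp add: ruled_second_differential_def)
  with v[of "(1, 0)"] v1
  show "v \<in> (\<lambda>c. (0, c)) ` {c. orth_proj_perp T (\<Sum>i\<in>UNIV. c $ i *\<^sub>R vector_derivative (X i) (at (fst p))) = 0}"
    by (intro image_eqI[of _ _ "snd v"]) (simp_all add: prod_eq_iff)
qed

lemma vector_derivative_ruling_in_tangent_space:
  fixes X :: "'k::finite \<Rightarrow> real \<Rightarrow> 'a::euclidean_space"
  assumes data: "ruled_data I \<gamma> X" and rank_one: "rank_one_ruled I \<gamma> X"
    and pI: "fst p \<in> I" and regular: "regular_point (ruled_map \<gamma> X) p"
  shows "vector_derivative (X j) (at (fst p)) \<in> tangent_space (ruled_map \<gamma> X) p"
proof (rule ccontr)
  let ?\<sigma> = "ruled_map \<gamma> X"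
  define T where "T = tangent_space ?\<sigma> p"
  define f where "f c = orth_proj_perp T (\<Sum>i\<in>UNIV. c $ i *\<^sub>R vector_derivative (X i) (at (fst p)))"
    for c :: "real^'k"
  assume normal: "vector_derivative (X j) (at (fst p)) \<notin> tangent_space ?\<sigma> p"
  have d\<sigma>: "(?\<sigma> has_derivative ruled_differential \<gamma> X p) (at p)"
    by (rule frechet_derivative_ruled_map(2)[OF data pI])
  have sT: "subspace T" unfolding T_def using d\<sigma> by (metis subspace_tangent_space differentiable_def)
  have "linear f" unfolding f_def[abs_def]
    by (intro linear_compose[OF _ linear_orth_proj_perp[OF sT], unfolded o_def] linearI)
       (simp_all add: algebra_simps sum.distrib scaleR_sum_right)
  moreover have "f (axis j 1) \<noteq> 0"
    using normal by (simp add: f_def T_def sum_axis_scaleR orth_proj_perp_eq_0_iff[OF sT[unfolded T_def]])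
  ultimately have dim_ker: "dim {c. f c = 0} < CARD('k)"
    using dim_kernel_less_DIM by fastforce
  have lin0: "linear (\<lambda>c::real^'k. (0::real, c))" by (rule linearI) auto
  have "dim (sff_kernel ?\<sigma> p) \<le> dim {v. \<forall>w. sff ?\<sigma> p v w = 0}"
    unfolding sff_kernel_def frechet_derivative_ruled_map(1)[OF data pI]
    by (rule dim_image_le[OF has_derivative_linear[OF d\<sigma>]])
  also have "\<dots> \<le> dim ((\<lambda>c. (0::real, c)) ` {c. f c = 0})"
    unfolding f_def T_def by (rule dim_subset[OF sff_kernel_ruled_map_subset[OF data pI normal]])
  also have "\<dots> \<le> dim {c. f c = 0}" by (rule dim_image_le[OF lin0])
  finally have "dim (sff_kernel ?\<sigma> p) < CARD('k)" using dim_ker by simp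
  moreover have "dim (sff_kernel ?\<sigma> p) = CARD('k)"
    using rank_one pI regular unfolding rank_one_ruled_def by blast
  ultimately show False by simp
qed

lemma ruling_degree_le_1_if_span:
  assumes "\<And>j. orth_proj_perp (ruling_dist X t) (vector_derivative (X j) (at t)) \<in> span {w}"
  shows "ruling_degree X t \<le> 1"
proof -
  have "rho X t v \<in> span {w}" for v
    unfolding rho_def by (intro span_sum span_mul assms)
  then have "rho X t ` ruling_dist X t \<subseteq> span {w}" by blast
  then have "dim (rho X t ` ruling_dist X t) \<le> card {w}" by (rule dim_le_card) simp
  then show ?thesis by (simp add: ruling_degree_def)
qed

lemma ruling_degree_le_1:
  assumes data: "ruled_data I \<gamma> X" and rank_one: "rank_one_ruled I \<gamma> X" and tI: "t \<in> I"
  shows "ruling_degree X t \<le> 1"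
proof -
  let ?D = "ruling_dist X t" and ?V = "ruling_velocity \<gamma> X t"
  have sD: "subspace ?D" by (simp add: ruling_dist_def)
  show ?thesis
  proof (cases "\<exists>u. ?V u \<notin> ?D")
    case True
    then obtain u where u: "?V u \<notin> ?D" by blast
    define p where "p = (t, u)"
    have "orth_proj_perp ?D (vector_derivative (X j) (at t)) \<in> span {orth_proj_perp ?D (?V u)}" for j
    proof -
      have "regular_point (ruled_map \<gamma> X) p"
        using regular_point_ruled_map[OF data] tI u by (simp add: p_def)
      then have "vector_derivative (X j) (at t) \<in> range (ruled_differential \<gamma> X p)"
        using vector_derivative_ruling_in_tangent_space[OF data rank_one, of p j] tI
          frechet_derivative_ruled_map(1)[OF data, of p]
        by (simp add: p_def tangent_space_def)
      then obtain z where "vector_derivative (X j) (at t) = ruled_differential \<gamma> X p z" by blast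
      then have "orth_proj_perp ?D (vector_derivative (X j) (at t)) = fst z *\<^sub>R orth_proj_perp ?D (?V u)"
        using orth_proj_perp_ruled_differential[of X p \<gamma> z] by (simp add: p_def)
      then show ?thesis by (simp add: span_mul span_base)
    qed
    then show ?thesis by (rule ruling_degree_le_1_if_span)
  next
    case False
    have "vector_derivative (X j) (at t) = ?V (axis j 1) - ?V 0" for j
      by (simp add: ruling_velocity_def sum_axis_scaleR)
    then have "vector_derivative (X j) (at t) \<in> ?D" for j
      using False sD by (simp add: subspace_diff)
    then have "orth_proj_perp ?D (vector_derivative (X j) (at t)) \<in> span {0}" for j
      by (simp add: orth_proj_perp_eq_0_iff[OF sD])
    then show ?thesis by (rule ruling_degree_le_1_if_span)
  qed
qed

theorem mainTheorem6:
  fixes I :: "real set" and \<gamma> :: "real \<Rightarrow> 'a::euclidean_space"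
    and X :: "'k::finite \<Rightarrow> real \<Rightarrow> 'a"
  assumes "ruled_data I \<gamma> X"
    and "rank_one_ruled I \<gamma> X"
  shows "(\<forall>t\<in>I. ruling_degree X t \<le> 1) \<and> (noncylindrical I X \<longrightarrow> degree_one I X)"
  using ruling_degree_le_1[OF assms] unfolding noncylindrical_def degree_one_def
  by (metis le_antisym less_one not_le)

end
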